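(* Let $T:V\to\mathfrak g$ be an $\mathcal O$-operator on a Lie algebra $\mathfrak g$ with respect to a representation $(V;\rho)$. If $\mathcal Z^1(V,\mathfrak g)=d_{\bar\rho}(\mathrm{Nij}(T))$, then $T$ is rigid.
   Context: An $\mathcal O$-operator: linear $T:V\to\mathfrak g$ with $[Tu,Tv]=T(\rho(Tu)(v)-\rho(Tv)(u))$. $\bar\rho(u)(y)=[Tu,y]+T\rho(y)(u)$; $d_{\bar\rho}y(u)=[Tu,y]+T\rho(y)(u)$ for $y\in\mathfrak g$; $\mathcal Z^1(V,\mathfrak g)$ is the set of linear $f:V\to\mathfrak g$ with $[Tu,f(v)]-[Tv,f(u)]-T(\rho(f(u))(v)-\rho(f(v))(u))-f(\rho(Tu)(v)-\rho(Tv)(u))=0$ for all $u,v$. $\mathrm{Nij}(T)$ is the set of $x\in\mathfrak g$ with $[[x,y],[x,z]]=0$ and $\rho([x,y])\rho(x)=0$ for all $y,z\in\mathfrak g$, and $[x,[Tu,x]+T\rho(x)(u)]=0$ for all $u\in V$. A one-parameter formal deformation of $T$: $T_t=\sum_{i\ge0}\tau_it^i$, $\tau_i\in\mathrm{Hom}(V,\mathfrak g)$, $\tau_0=T$, extended $\mathbb K[[t]]$-linearly, with $[T_t(u),T_t(v)]=T_t(\rho(T_t(u))(v)-\rho(T_t(v))(u))$ in $\mathfrak g[[t]]$. Two formal deformations $\overline T_t,T_t$ are equivalent if there exist $x\in\mathfrak g$, $\phi_i\in\mathfrak{gl}(\mathfrak g)$, $\varphi_i\in\mathfrak{gl}(V)$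 ($i\ge2$) with $\phi_t=\mathrm{Id}_{\mathfrak g}+t\,\mathrm{ad}_x+\sum_{i\ge2}\phi_it^i$, $\varphi_t=\mathrm{Id}_V+t\rho(x)+\sum_{i\ge2}\varphi_it^i$ satisfying $[\phi_t(y),\phi_t(z)]=\phi_t[y,z]$, $T_t\circ\varphi_t=\phi_t\circ\overline T_t$, and $\varphi_t\rho(y)u=\rho(\phi_t(y))\varphi_t(u)$. A formal deformation is trivial if it is equivalent to $T$ (regarded as a deformation of itself), and $T$ is rigid if every one-parameter formal deformation of $T$ is trivial. *)

theory Defs
  imports Complex_Main
begin

text \<open>Lie algebra g over a field 'k: carrier type 'g with scalar multiplication sg and bracket br.
Representation (V; rho): carrier type 'v with scalar multiplication sv.\<close>

definition lie_algebra :: "('k::field \<Rightarrow> 'g \<Rightarrow> 'g::ab_group_add) \<Rightarrow> ('g \<Rightarrow> 'g \<Rightarrow> 'g) \<Rightarrow> bool" where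
  "lie_algebra sg br \<longleftrightarrow> vector_space sg
     \<and> (\<forall>x. Vector_Spaces.linear sg sg (br x))
     \<and> (\<forall>y. Vector_Spaces.linear sg sg (\<lambda>x. br x y))
     \<and> (\<forall>x. br x x = 0)
     \<and> (\<forall>x y z. br x (br y z) + br y (br z x) + br z (br x y) = 0)"

definition lie_rep :: "('k::field \<Rightarrow> 'g \<Rightarrow> 'g::ab_group_add) \<Rightarrow> ('g \<Rightarrow> 'g \<Rightarrow> 'g)
    \<Rightarrow> ('k \<Rightarrow> 'v \<Rightarrow> 'v::ab_group_add) \<Rightarrow> ('g \<Rightarrow> 'v \<Rightarrow> 'v) \<Rightarrow> bool" where
  "lie_rep sg br sv \<rho> \<longleftrightarrow> lie_algebra sg br \<and> vector_space sv
     \<and> (\<forall>x. Vector_Spaces.linear sv sv (\<rho> x))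
     \<and> (\<forall>u. Vector_Spaces.linear sg sv (\<lambda>x. \<rho> x u))
     \<and> (\<forall>x y u. \<rho> (br x y) u = \<rho> x (\<rho> y u) - \<rho> y (\<rho> x u))"

definition O_operator where
  "O_operator sg br sv \<rho> T \<longleftrightarrow> lie_rep sg br sv \<rho> \<and> Vector_Spaces.linear sv sg T
     \<and> (\<forall>u v. br (T u) (T v) = T (\<rho> (T u) v - \<rho> (T v) u))"

definition d_rhobar :: "('g \<Rightarrow> 'g \<Rightarrow> 'g) \<Rightarrow> ('g \<Rightarrow> 'v \<Rightarrow> 'v) \<Rightarrow> ('v \<Rightarrow> 'g) \<Rightarrow> 'g \<Rightarrow> 'v \<Rightarrow> 'g::ab_group_add" where
  "d_rhobar br \<rho> T y = (\<lambda>u. br (T u) y + T (\<rho> y u))"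

definition Z1 where
  "Z1 sg br sv \<rho> T = {f. Vector_Spaces.linear sv sg f \<and>
     (\<forall>u v. br (T u) (f v) - br (T v) (f u) - T (\<rho> (f u) v - \<rho> (f v) u)
            - f (\<rho> (T u) v - \<rho> (T v) u) = 0)}"

definition Nij where
  "Nij br \<rho> T = {x. (\<forall>y z. br (br x y) (br x z) = 0)
     \<and> (\<forall>y u. \<rho> (br x y) (\<rho> x u) = 0)
     \<and> (\<forall>u. br x (br (T u) x + T (\<rho> x u)) = 0)}"

text \<open>A one-parameter formal deformation T_t = sum tau_i t^i, tau_0 = T, as the coefficient
sequence tau; the identity in g[[t]] is imposed coefficientwise (Cauchy products).\<close>
definition formal_deformation where
  "formal_deformation sg br sv \<rho> T \<tau> \<longleftrightarrow> \<tau> 0 = T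
     \<and> (\<forall>i::nat. Vector_Spaces.linear sv sg (\<tau> i))
     \<and> (\<forall>(n::nat) u v. (\<Sum>i\<le>n. br (\<tau> i u) (\<tau> (n - i) v))
               = (\<Sum>i\<le>n. \<tau> i (\<rho> (\<tau> (n - i) u) v - \<rho> (\<tau> (n - i) v) u)))"

text \<open>Equivalence of formal deformations Tbar_t (coefficients \<tau>b) and T_t (coefficients \<tau>):
phi_t = sum phi_i t^i on g, varphi_t = sum varphi_i t^i on V; all identities coefficientwise.\<close>
definition deformations_equivalent where
  "deformations_equivalent sg br sv \<rho> \<tau>b \<tau> \<longleftrightarrow>
     (\<exists>x \<phi> \<psi>.
        \<phi> 0 = id \<and> \<phi> 1 = br x \<and> (\<forall>i::nat. Vector_Spaces.linear sg sg (\<phi> i))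
      \<and> \<psi> 0 = id \<and> \<psi> 1 = \<rho> x \<and> (\<forall>i::nat. Vector_Spaces.linear sv sv (\<psi> i))
      \<and> (\<forall>(n::nat) y z. (\<Sum>i\<le>n. br (\<phi> i y) (\<phi> (n - i) z)) = \<phi> n (br y z))
      \<and> (\<forall>(n::nat) u. (\<Sum>i\<le>n. \<tau> i (\<psi> (n - i) u)) = (\<Sum>i\<le>n. \<phi> i (\<tau>b (n - i) u)))
      \<and> (\<forall>(n::nat) y u. \<psi> n (\<rho> y u) = (\<Sum>i\<le>n. \<rho> (\<phi> i y) (\<psi> (n - i) u))))"

definition trivial_deformation where
  "trivial_deformation sg br sv \<rho> T \<tau> \<longleftrightarrow>
     deformations_equivalent sg br sv \<rho> \<tau> (\<lambda>i. if (i::nat) = 0 then T else (\<lambda>_. 0))"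

definition rigid where
  "rigid sg br sv \<rho> T \<longleftrightarrow>
     (\<forall>\<tau>. formal_deformation sg br sv \<rho> T \<tau> \<longrightarrow> trivial_deformation sg br sv \<rho> T \<tau>)"

end

theory Submission
  imports Defs
begin

text \<open>
  Suppose the coefficients of \<open>t, ..., t^(K-1)\<close> of a formal deformation \<open>T\<^sub>t\<close> vanish. Then the
  deformation identity in degree \<open>K\<close> says that the coefficient of \<open>t^K\<close> is a 1-cocycle, so it is
  \<open>d x\<close> for a Nijenhuis element \<open>x\<close>. The first two Nijenhuis conditions make \<open>Id + t^K ad x\<close> an
  automorphism of \<open>\<gg>[[t]]\<close> which, together with \<open>Id + t^K \<rho>(x)\<close>, respects the action on
  \<open>V[[t]]\<close>; conjugating \<open>T\<^sub>t\<close> by this pair gives a formal deformation whose coefficients of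
  \<open>t, ..., t^K\<close> vanish. The gauge used in step \<open>K\<close> does not touch coefficients below \<open>t^K\<close>, so
  the products of the gauges stabilise coefficientwise, and their limits exhibit \<open>T\<^sub>t\<close> as
  equivalent to \<open>T\<close>.
\<close>

section \<open>Formal power series\<close>

lemma linear_imp_additive: "Vector_Spaces.linear s1 s2 f \<Longrightarrow> additive f"
  by (simp add: additive.intro Vector_Spaces.linear_iff)

text \<open>Formal power series are coefficient sequences \<open>nat \<Rightarrow> 'a\<close>, series of operators are
  \<open>nat \<Rightarrow> 'a \<Rightarrow> 'b\<close>; \<open>series_shift k\<close> is multiplication by \<open>t^k\<close> and \<open>id_plus k M\<close> is
  \<open>Id + t^k M\<close>.\<close>

definition cauchy_prod :: "('a \<Rightarrow> 'b \<Rightarrow> 'c::comm_monoid_add) \<Rightarrow> (nat \<Rightarrow> 'a) \<Rightarrow> (nat \<Rightarrow> 'b) \<Rightarrow> nat \<Rightarrow> 'c"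
  where "cauchy_prod f A B n = (\<Sum>i\<le>n. f (A i) (B (n - i)))"

definition series_apply :: "(nat \<Rightarrow> 'a \<Rightarrow> 'b::comm_monoid_add) \<Rightarrow> (nat \<Rightarrow> 'a) \<Rightarrow> nat \<Rightarrow> 'b"
  where "series_apply F = cauchy_prod (\<lambda>f. f) F"

definition series_comp :: "(nat \<Rightarrow> 'b \<Rightarrow> 'c::comm_monoid_add) \<Rightarrow> (nat \<Rightarrow> 'a \<Rightarrow> 'b) \<Rightarrow> nat \<Rightarrow> 'a \<Rightarrow> 'c"
  where "series_comp F G n x = (\<Sum>i\<le>n. F i (G (n - i) x))"

definition series_shift :: "nat \<Rightarrow> (nat \<Rightarrow> 'a::zero) \<Rightarrow> nat \<Rightarrow> 'a"
  where "series_shift k w n = (if k \<le> n then w (n - k) else 0)"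

definition series_const :: "'a::zero \<Rightarrow> nat \<Rightarrow> 'a"
  where "series_const a n = (if n = 0 then a else 0)"

definition id_plus :: "nat \<Rightarrow> ('a::zero \<Rightarrow> 'a) \<Rightarrow> nat \<Rightarrow> 'a \<Rightarrow> 'a"
  where "id_plus k M n = (if n = 0 then id else if n = k then M else (\<lambda>_. 0))"

definition series_id :: "nat \<Rightarrow> 'a::zero \<Rightarrow> 'a"
  where "series_id = id_plus 1 (\<lambda>_. 0)"

lemma sum_atMost_triangle:
  fixes f :: "nat \<Rightarrow> nat \<Rightarrow> nat \<Rightarrow> 'a::comm_monoid_add"
  shows "(\<Sum>j\<le>k. \<Sum>i\<le>j. f i (j - i) (n - j)) = (\<Sum>j\<le>k. \<Sum>i\<le>k - j. f j i (n - j - i))"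
  by (induct k) (simp_all add: Suc_diff_le sum.distrib add.assoc)

lemma sum_atMost_ends:
  fixes f :: "nat \<Rightarrow> 'a::comm_monoid_add"
  assumes "0 < K" and "\<And>i. 0 < i \<Longrightarrow> i < K \<Longrightarrow> f i = 0"
  shows "(\<Sum>i\<le>K. f i) = f 0 + f K"
proof -
  have "(\<Sum>i\<le>K. f i) = (\<Sum>i\<le>K. (if i = 0 then f 0 else 0) + (if i = K then f K else 0))"
    using assms by (intro sum.cong) auto
  then show ?thesis
    using assms(1) by (simp add: sum.distrib)
qed

lemma cauchy_prod_commute: "cauchy_prod f A B n = cauchy_prod (\<lambda>b a. f a b) B A n"
  unfolding cauchy_prod_def
  by (rule sum.reindex_bij_witness[where i="\<lambda>i. n - i" and j="\<lambda>i. n - i"]) auto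

lemma cauchy_prod_shift_right:
  assumes "\<And>i. f (A i) 0 = 0"
  shows "cauchy_prod f A (series_shift k B) = series_shift k (cauchy_prod f A B)"
proof
  fix n
  show "cauchy_prod f A (series_shift k B) n = series_shift k (cauchy_prod f A B) n"
  proof (cases "k \<le> n")
    case True
    have "cauchy_prod f A (series_shift k B) n
        = (\<Sum>i\<le>n. f (A i) (if k \<le> n - i then B (n - i - k) else 0))"
      unfolding cauchy_prod_def series_shift_def by simp
    also have "\<dots> = (\<Sum>i\<le>n - k. f (A i) (B (n - k - i)))"
      by (rule sum.mono_neutral_cong_right) (use True assms in \<open>auto simp: add.commute\<close>)
    finally show ?thesis using True unfolding series_shift_def cauchy_prod_def by simp
  qed (auto simp: cauchy_prod_def series_shift_def assms intro!: sum.neutral)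
qed

lemma cauchy_prod_shift_left:
  assumes "\<And>b. f 0 b = 0"
  shows "cauchy_prod f (series_shift k A) B = series_shift k (cauchy_prod f A B)"
proof -
  have "cauchy_prod f (series_shift k A) B = cauchy_prod (\<lambda>b a. f a b) B (series_shift k A)"
    using cauchy_prod_commute by blast
  also have "\<dots> = series_shift k (cauchy_prod (\<lambda>b a. f a b) B A)"
    by (rule cauchy_prod_shift_right) (rule assms)
  also have "cauchy_prod (\<lambda>b a. f a b) B A = cauchy_prod f A B"
    by (rule ext) (rule cauchy_prod_commute[symmetric])
  finally show ?thesis .
qed

lemma cauchy_prod_add_left:
  assumes "\<And>i. additive (\<lambda>a. f a (C i))"
  shows "cauchy_prod f (\<lambda>m. A m + B m) C = (\<lambda>n. cauchy_prod f A C n + cauchy_prod f B C n)"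
  unfolding cauchy_prod_def by (simp add: additive.add[OF assms] sum.distrib)

lemma cauchy_prod_add_right:
  assumes "\<And>i. additive (f (A i))"
  shows "cauchy_prod f A (\<lambda>m. B m + C m) = (\<lambda>n. cauchy_prod f A B n + cauchy_prod f A C n)"
  unfolding cauchy_prod_def by (simp add: additive.add[OF assms] sum.distrib)

lemma cauchy_prod_diff_right:
  assumes "\<And>i. additive (f (A i))"
  shows "cauchy_prod f A (\<lambda>m. B m - C m) = (\<lambda>n. cauchy_prod f A B n - cauchy_prod f A C n)"
  unfolding cauchy_prod_def by (simp add: additive.diff[OF assms] sum_subtractf)

lemma cauchy_prod_const_right:
  assumes "\<And>i. f (A i) 0 = 0"
  shows "cauchy_prod f A (series_const b) = (\<lambda>n. f (A n) b)"
proof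
  fix n
  have "cauchy_prod f A (series_const b) n = (\<Sum>i\<le>n. if i = n then f (A n) b else 0)"
    unfolding cauchy_prod_def series_const_def by (rule sum.cong) (auto simp: assms)
  then show "cauchy_prod f A (series_const b) n = f (A n) b" by simp
qed

lemma cauchy_prod_const_const:
  assumes "\<And>a. f a 0 = 0" and "\<And>b. f 0 b = 0"
  shows "cauchy_prod f (series_const a) (series_const b) = series_const (f a b)"
  by (simp add: cauchy_prod_const_right assms series_const_def fun_eq_iff)

lemma series_shift_diff:
  "series_shift k (\<lambda>m. X m - Y m)
    = (\<lambda>n. series_shift k X n - (series_shift k Y n :: 'a::ab_group_add))"
  by (simp add: series_shift_def fun_eq_iff)

lemma series_shift_add:
  "series_shift k (\<lambda>m. X m + Y m)
    = (\<lambda>n. series_shift k X n + (series_shift k Y n :: 'a::monoid_add))"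
  by (simp add: series_shift_def fun_eq_iff)

lemma series_shift_zero: "series_shift k (\<lambda>_. 0) = (\<lambda>_. 0)"
  by (simp add: series_shift_def fun_eq_iff)

lemma cauchy_prod_shift_square_zero:
  assumes left: "\<And>b. additive (\<lambda>a. f a b)" and right: "\<And>a. additive (f a)"
    and square_zero: "cauchy_prod f A' B' = (\<lambda>_. 0)"
  shows "cauchy_prod f (\<lambda>n. A n + series_shift k A' n) (\<lambda>n. B n + series_shift k B' n)
    = (\<lambda>n. cauchy_prod f A B n
          + series_shift k (\<lambda>m. cauchy_prod f A B' m + cauchy_prod f A' B m) n)"
proof -
  have zero_left: "f 0 b = 0" and zero_right: "f a 0 = 0" for a b
    using additive.zero[OF left] additive.zero[OF right] by auto
  show ?thesis
    by (simp add: cauchy_prod_add_left[where f=f, OF left]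
        cauchy_prod_add_right[where f=f, OF right] cauchy_prod_shift_left[where f=f, OF zero_left]
        cauchy_prod_shift_right[where f=f, OF zero_right]
        square_zero series_shift_add series_shift_zero add.assoc)
qed

lemma series_apply_add:
  assumes "\<And>i. additive (F i)"
  shows "series_apply F (\<lambda>m. u m + v m) = (\<lambda>n. series_apply F u n + series_apply F v n)"
  unfolding series_apply_def by (rule cauchy_prod_add_right) (rule assms)

lemma series_apply_diff:
  assumes "\<And>i. additive (F i)"
  shows "series_apply F (\<lambda>m. u m - v m) = (\<lambda>n. series_apply F u n - series_apply F v n)"
  unfolding series_apply_def by (rule cauchy_prod_diff_right) (rule assms)

lemma series_apply_shift:
  assumes "\<And>i. F i 0 = 0"
  shows "series_apply F (series_shift k u) = series_shift k (series_apply F u)"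
  unfolding series_apply_def by (rule cauchy_prod_shift_right) (rule assms)

lemma series_apply_const:
  assumes "\<And>i. F i 0 = 0"
  shows "series_apply F (series_const a) = (\<lambda>n. F n a)"
  unfolding series_apply_def by (rule cauchy_prod_const_right) (rule assms)

lemma series_apply_comp:
  assumes "\<And>i. additive (F i)"
  shows "series_apply (series_comp F G) u = series_apply F (series_apply G u)"
proof
  fix n
  have "series_apply (series_comp F G) u n = (\<Sum>j\<le>n. \<Sum>i\<le>j. F i (G (j - i) (u (n - j))))"
    unfolding series_apply_def cauchy_prod_def series_comp_def by simp
  also have "\<dots> = (\<Sum>j\<le>n. \<Sum>i\<le>n - j. F j (G i (u (n - j - i))))"
    by (rule sum_atMost_triangle)
  also have "\<dots> = series_apply F (series_apply G u) n"
    unfolding series_apply_def cauchy_prod_def by (simp add: additive.sum[OF assms])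
  finally show "series_apply (series_comp F G) u n = series_apply F (series_apply G u) n" .
qed

lemma series_comp_assoc:
  assumes "\<And>i. additive (F i)"
  shows "series_comp (series_comp F G) H = series_comp F (series_comp G H)"
proof (intro ext)
  fix n x
  have "series_comp (series_comp F G) H n x = (\<Sum>j\<le>n. \<Sum>i\<le>j. F i (G (j - i) (H (n - j) x)))"
    unfolding series_comp_def by simp
  also have "\<dots> = (\<Sum>j\<le>n. \<Sum>i\<le>n - j. F j (G i (H (n - j - i) x)))"
    by (rule sum_atMost_triangle)
  also have "\<dots> = series_comp F (series_comp G H) n x"
    unfolding series_comp_def by (simp add: additive.sum[OF assms])
  finally show "series_comp (series_comp F G) H n x = series_comp F (series_comp G H) n x" .
qed

lemma series_apply_id_plus:
  assumes "0 < k"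
  shows "series_apply (id_plus k M) y = (\<lambda>n. y n + series_shift k (\<lambda>m. M (y m)) n)"
proof
  fix n
  have "series_apply (id_plus k M) y n
      = (\<Sum>i\<le>n. (if i = 0 then y n else 0) + (if i = k then M (y (n - k)) else 0))"
    unfolding series_apply_def cauchy_prod_def id_plus_def by (rule sum.cong) (use assms in auto)
  then show "series_apply (id_plus k M) y n = y n + series_shift k (\<lambda>m. M (y m)) n"
    unfolding series_shift_def by (simp add: sum.distrib)
qed

lemma series_comp_id_plus_left:
  assumes "0 < k"
  shows "series_comp (id_plus k M) G n x = G n x + (if k \<le> n then M (G (n - k) x) else 0)"
proof -
  have "series_comp (id_plus k M) G n x
      = (\<Sum>i\<le>n. (if i = 0 then G n x else 0) + (if i = k then M (G (n - k) x) else 0))"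
    unfolding series_comp_def id_plus_def by (rule sum.cong) (use assms in auto)
  then show ?thesis by (simp add: sum.distrib)
qed

lemma series_comp_id_plus_right:
  assumes "0 < k" and "\<And>i. G i 0 = 0"
  shows "series_comp G (id_plus k R) n u = G n u + (if k \<le> n then G (n - k) (R u) else 0)"
proof -
  have "series_comp G (id_plus k R) n u
      = (\<Sum>i\<le>n. (if i = n then G n u else 0) + (if i = n - k \<and> k \<le> n then G (n - k) (R u) else 0))"
    unfolding series_comp_def id_plus_def by (rule sum.cong) (use assms in auto)
  then show ?thesis by (simp add: sum.distrib)
qed

lemma series_apply_id: "series_apply series_id y = y"
  by (simp add: series_id_def series_apply_id_plus series_shift_def)

lemma series_comp_id_left: "series_comp series_id G = G"
  by (simp add: series_id_def series_comp_id_plus_left fun_eq_iff)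

lemma series_comp_id_right: "(\<And>i. G i 0 = 0) \<Longrightarrow> series_comp G series_id = G"
  by (simp add: series_id_def series_comp_id_plus_right fun_eq_iff)

lemma series_decompose:
  fixes u :: "nat \<Rightarrow> 'a::monoid_add"
  shows "u = (\<lambda>n. series_const (u 0) n + series_shift 1 (\<lambda>m. u (Suc m)) n)"
  by (rule ext) (simp add: series_const_def series_shift_def not_less_eq_eq)

lemma series_biadditive_eq_0:
  fixes E :: "(nat \<Rightarrow> 'a::monoid_add) \<Rightarrow> (nat \<Rightarrow> 'b::monoid_add) \<Rightarrow> nat \<Rightarrow> 'c::ab_group_add"
  assumes add_left: "\<And>u u' v. E (\<lambda>m. u m + u' m) v = (\<lambda>n. E u v n + E u' v n)"
    and add_right: "\<And>u v v'. E u (\<lambda>m. v m + v' m) = (\<lambda>n. E u v n + E u v' n)"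
    and shift_left: "\<And>u v. E (series_shift 1 u) v = series_shift 1 (E u v)"
    and shift_right: "\<And>u v. E u (series_shift 1 v) = series_shift 1 (E u v)"
    and const: "\<And>a b. E (series_const a) (series_const b) = (\<lambda>_. 0)"
  shows "E u v n = 0"
proof (induct n arbitrary: u v rule: less_induct)
  case (less n)
  define u1 where "u1 = (\<lambda>m. u (Suc m))"
  define v1 where "v1 = (\<lambda>m. v (Suc m))"
  have "E u v n = E (\<lambda>n. series_const (u 0) n + series_shift 1 u1 n)
                    (\<lambda>n. series_const (v 0) n + series_shift 1 v1 n) n"
    unfolding u1_def v1_def by (subst (1 2) series_decompose) (rule refl)
  also have "\<dots> = series_shift 1 (E (series_const (u 0)) v1) n
      + (series_shift 1 (E u1 (series_const (v 0))) n
        + series_shift 1 (E (series_shift 1 u1) v1) n)"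
    by (simp only: add_left add_right shift_left shift_right const) simp
  also have "\<dots> = 0"
    unfolding series_shift_def by (simp add: less)
  finally show ?case .
qed

function apply_inv_id_plus :: "nat \<Rightarrow> ('a::ab_group_add \<Rightarrow> 'a) \<Rightarrow> (nat \<Rightarrow> 'a) \<Rightarrow> nat \<Rightarrow> 'a"
  where "apply_inv_id_plus k R w n =
    (if 0 < k \<and> k \<le> n then w n - R (apply_inv_id_plus k R w (n - k)) else w n)"
  by pat_completeness auto
termination by (relation "measure (\<lambda>(k, R, w, n). n)") auto

function comp_inv_id_plus :: "nat \<Rightarrow> ('a \<Rightarrow> 'a) \<Rightarrow> (nat \<Rightarrow> 'a \<Rightarrow> 'b::ab_group_add) \<Rightarrow> nat \<Rightarrow> 'a \<Rightarrow> 'b"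
  where "comp_inv_id_plus k R C n =
    (if 0 < k \<and> k \<le> n then (\<lambda>u. C n u - comp_inv_id_plus k R C (n - k) (R u)) else C n)"
  by pat_completeness auto
termination by (relation "measure (\<lambda>(k, R, C, n). n)") auto

declare apply_inv_id_plus.simps [simp del] comp_inv_id_plus.simps [simp del]

lemma series_apply_id_plus_inv:
  assumes "0 < k"
  shows "series_apply (id_plus k R) (apply_inv_id_plus k R w) = w"
proof
  fix n
  show "series_apply (id_plus k R) (apply_inv_id_plus k R w) n = w n"
    using apply_inv_id_plus.simps[of k R w n] assms
    by (auto simp: series_apply_id_plus series_shift_def)
qed

lemma linear_series_comp:
  assumes F: "\<And>i. Vector_Spaces.linear s2 s3 (F i)" and G: "\<And>i. Vector_Spaces.linear s1 s2 (G i)"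
  shows "Vector_Spaces.linear s1 s3 (series_comp F G n)"
proof -
  have "vector_space_pair s1 s3"
    using F[of 0] G[of 0] by (simp add: vector_space_pair_def Vector_Spaces.linear_iff)
  then have "Vector_Spaces.linear s1 s3 (\<lambda>x. \<Sum>i\<le>n. (F i \<circ> G (n - i)) x)"
    by (rule vector_space_pair.linear_compose_sum)
      (use Vector_Spaces.linear_compose[OF G F] in \<open>simp add: o_def\<close>)
  then show ?thesis
    by (simp add: series_comp_def[abs_def])
qed

lemma linear_id_plus:
  assumes "vector_space s" and "Vector_Spaces.linear s s M"
  shows "Vector_Spaces.linear s s (id_plus k M n)"
  using assms vector_space.linear_id[of s] vector_space_pair.linear_zero[of s s]
  by (simp add: id_plus_def vector_space_pair_def)

lemma linear_series_id:
  assumes "vector_space s"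
  shows "Vector_Spaces.linear s s (series_id n)"
  using assms vector_space_pair.linear_zero[of s s]
  by (simp add: series_id_def linear_id_plus vector_space_pair_def)

lemma linear_comp_inv_id_plus:
  assumes R: "Vector_Spaces.linear s1 s1 R" and C: "\<And>n. Vector_Spaces.linear s1 s2 (C n)"
  shows "Vector_Spaces.linear s1 s2 (comp_inv_id_plus k R C n)"
proof (induct n rule: less_induct)
  case (less n)
  have pair: "vector_space_pair s1 s2"
    using C[of 0] by (simp add: vector_space_pair_def Vector_Spaces.linear_iff)
  show ?case
  proof (cases "0 < k \<and> k \<le> n")
    case True
    then have "Vector_Spaces.linear s1 s2 (comp_inv_id_plus k R C (n - k) \<circ> R)"
      using R less by (intro Vector_Spaces.linear_compose) auto
    then show ?thesis
      using True vector_space_pair.linear_compose_sub[OF pair C]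
      by (subst comp_inv_id_plus.simps) (simp add: o_def)
  qed (subst comp_inv_id_plus.simps, auto simp: C)
qed

lemma series_comp_inv_id_plus:
  assumes "0 < k" and "Vector_Spaces.linear s1 s1 R" and "\<And>n. Vector_Spaces.linear s1 s2 (C n)"
  shows "series_comp (comp_inv_id_plus k R C) (id_plus k R) = C"
proof (intro ext)
  fix n u
  have "vector_space_pair s1 s2"
    using assms(3)[of 0] by (simp add: vector_space_pair_def Vector_Spaces.linear_iff)
  then have "comp_inv_id_plus k R C i 0 = 0" for i
    using linear_comp_inv_id_plus[OF assms(2,3)] by (rule vector_space_pair.linear_0)
  then show "series_comp (comp_inv_id_plus k R C) (id_plus k R) n u = C n u"
    using comp_inv_id_plus.simps[of k R C n] assms(1) by (simp add: series_comp_id_plus_right)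
qed

lemma id_plus_products_stabilize:
  assumes step: "\<And>m. F (Suc m) = series_comp (id_plus (Suc m) (M m)) (F m)" and "n \<le> m"
  shows "F m n = F n n"
  using \<open>n \<le> m\<close>
proof (induction m)
  case (Suc m)
  show ?case
  proof (cases "n = Suc m")
    case False
    then have "F (Suc m) n = F m n"
      using Suc.prems by (simp add: step series_comp_id_plus_left fun_eq_iff)
    then show ?thesis
      using False Suc by simp
  qed simp
qed simp

section \<open>Series over a Lie algebra representation\<close>

locale lie_representation =
  fixes sg :: "'k::field \<Rightarrow> 'g \<Rightarrow> 'g::ab_group_add"
    and br :: "'g \<Rightarrow> 'g \<Rightarrow> 'g"
    and sv :: "'k \<Rightarrow> 'v \<Rightarrow> 'v::ab_group_add"
    and \<rho> :: "'g \<Rightarrow> 'v \<Rightarrow> 'v"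
  assumes lie_rep: "lie_rep sg br sv \<rho>"
begin

lemma lie_algebra: "lie_algebra sg br"
  using lie_rep by (simp add: lie_rep_def)

lemma vector_space_g: "vector_space sg"
  using lie_algebra by (simp add: lie_algebra_def)

lemma vector_space_v: "vector_space sv"
  using lie_rep by (simp add: lie_rep_def)

lemma linear_br: "Vector_Spaces.linear sg sg (br x)"
  using lie_algebra by (simp add: lie_algebra_def)

lemma linear_rho: "Vector_Spaces.linear sv sv (\<rho> x)"
  using lie_rep by (simp add: lie_rep_def)

lemma additive_br: "additive (br x)"
  using linear_br by (rule linear_imp_additive)

lemma additive_br_left: "additive (\<lambda>x. br x y)"
  using lie_algebra linear_imp_additive unfolding lie_algebra_def by blast

lemma additive_rho: "additive (\<rho> x)"
  using linear_rho by (rule linear_imp_additive)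

lemma additive_rho_left: "additive (\<lambda>x. \<rho> x u)"
  using lie_rep linear_imp_additive unfolding lie_rep_def by blast

lemma br_zero_left [simp]: "br 0 y = 0"
  using additive.zero[OF additive_br_left] by simp

lemma br_zero_right [simp]: "br x 0 = 0"
  by (rule additive.zero[OF additive_br])

lemma rho_zero_left [simp]: "\<rho> 0 u = 0"
  using additive.zero[OF additive_rho_left] by simp

lemma rho_zero_right [simp]: "\<rho> x 0 = 0"
  by (rule additive.zero[OF additive_rho])

lemma rho_br: "\<rho> (br x y) u = \<rho> x (\<rho> y u) - \<rho> y (\<rho> x u)"
  using lie_rep by (simp add: lie_rep_def)

lemma br_anticomm: "br x y = - br y x"
proof -
  have "0 = br (x + y) (x + y)"
    using lie_algebra by (simp add: lie_algebra_def)
  also have "\<dots> = br x x + br x y + (br y x + br y y)"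
    by (simp add: additive.add[OF additive_br_left] additive.add[OF additive_br])
  finally show ?thesis
    using lie_algebra by (simp add: lie_algebra_def eq_neg_iff_add_eq_0)
qed

lemma br_derivation: "br x (br y z) = br (br x y) z + br y (br x z)"
proof -
  have "br x (br y z) + br y (br z x) + br z (br x y) = 0"
    using lie_algebra by (simp add: lie_algebra_def)
  then show ?thesis
    using br_anticomm[of z x] br_anticomm[of z "br x y"] additive.minus[OF additive_br]
    by (simp add: algebra_simps eq_neg_iff_add_eq_0)
qed

lemmas cauchy_prod_br =
  cauchy_prod_add_left[where f=br, OF additive_br_left]
  cauchy_prod_add_right[where f=br, OF additive_br]
  cauchy_prod_shift_left[where f=br, OF br_zero_left]
  cauchy_prod_shift_right[where f=br, OF br_zero_right]

lemmas cauchy_prod_rho =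
  cauchy_prod_add_left[where f=\<rho>, OF additive_rho_left]
  cauchy_prod_add_right[where f=\<rho>, OF additive_rho]
  cauchy_prod_shift_left[where f=\<rho>, OF rho_zero_left]
  cauchy_prod_shift_right[where f=\<rho>, OF rho_zero_right]

text \<open>The O-operator identity for the \<open>\<bbbK>[[t]]\<close>-linear extension of \<open>\<sigma>\<close> to \<open>V[[t]]\<close>.\<close>
definition series_deformation :: "(nat \<Rightarrow> 'v \<Rightarrow> 'g) \<Rightarrow> bool" where
  "series_deformation \<sigma> \<longleftrightarrow> (\<forall>u v.
     cauchy_prod br (series_apply \<sigma> u) (series_apply \<sigma> v)
     = series_apply \<sigma>
         (\<lambda>m. cauchy_prod \<rho> (series_apply \<sigma> u) v m - cauchy_prod \<rho> (series_apply \<sigma> v) u m))"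

lemma series_deformation_iff_coefficients:
  assumes additive: "\<And>i. additive (\<sigma> i)"
  shows "series_deformation \<sigma> \<longleftrightarrow> (\<forall>n a b. (\<Sum>i\<le>n. br (\<sigma> i a) (\<sigma> (n - i) b))
           = (\<Sum>i\<le>n. \<sigma> i (\<rho> (\<sigma> (n - i) a) b - \<rho> (\<sigma> (n - i) b) a)))"
    (is "_ \<longleftrightarrow> (\<forall>n a b. ?coeff n a b)")
proof -
  have zero: "\<sigma> i 0 = 0" for i
    using additive by (rule additive.zero)
  define E where "E u v n = cauchy_prod br (series_apply \<sigma> u) (series_apply \<sigma> v) n
    - series_apply \<sigma>
        (\<lambda>m. cauchy_prod \<rho> (series_apply \<sigma> u) v m - cauchy_prod \<rho> (series_apply \<sigma> v) u m) n"
    for u v n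
  have E_const: "E (series_const a) (series_const b) n = 0 \<longleftrightarrow> ?coeff n a b" for a b n
    by (simp add: E_def series_apply_const zero cauchy_prod_const_right)
      (simp add: series_apply_def cauchy_prod_def)
  have "(\<forall>u v n. E u v n = 0) \<longleftrightarrow> (\<forall>n a b. ?coeff n a b)"
  proof
    assume "\<forall>n a b. ?coeff n a b"
    then have const: "E (series_const a) (series_const b) = (\<lambda>_. 0)" for a b
      using E_const by auto
    show "\<forall>u v n. E u v n = 0"
    proof (intro allI, rule series_biadditive_eq_0[where E=E])
      show "E (\<lambda>m. u m + u' m) v = (\<lambda>n. E u v n + E u' v n)" for u u' v
        unfolding E_def
        by (simp add: series_apply_add[where F=\<sigma>, OF additive]
            series_apply_diff[where F=\<sigma>, OF additive] cauchy_prod_br cauchy_prod_rho algebra_simps)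
      show "E u (\<lambda>m. v m + v' m) = (\<lambda>n. E u v n + E u v' n)" for u v v'
        unfolding E_def
        by (simp add: series_apply_add[where F=\<sigma>, OF additive]
            series_apply_diff[where F=\<sigma>, OF additive] cauchy_prod_br cauchy_prod_rho algebra_simps)
      show "E (series_shift 1 u) v = series_shift 1 (E u v)" for u v
        unfolding E_def
        by (simp only: series_apply_shift[where F=\<sigma>, OF zero] cauchy_prod_br cauchy_prod_rho
            series_shift_diff[symmetric])
      show "E u (series_shift 1 v) = series_shift 1 (E u v)" for u v
        unfolding E_def
        by (simp only: series_apply_shift[where F=\<sigma>, OF zero] cauchy_prod_br cauchy_prod_rho
            series_shift_diff[symmetric])
    qed (rule const)
  qed (use E_const in blast)
  then show ?thesis
    by (simp add: series_deformation_def E_def fun_eq_iff)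
qed

lemma formal_deformation_iff_series_deformation:
  "formal_deformation sg br sv \<rho> T \<sigma> \<longleftrightarrow>
     \<sigma> 0 = T \<and> (\<forall>i. Vector_Spaces.linear sv sg (\<sigma> i)) \<and> series_deformation \<sigma>"
proof (cases "\<forall>i. Vector_Spaces.linear sv sg (\<sigma> i)")
  case True
  then have "additive (\<sigma> i)" for i
    by (blast intro: linear_imp_additive)
  then show ?thesis
    using True by (simp add: formal_deformation_def series_deformation_iff_coefficients)
next
  case False
  then show ?thesis
    unfolding formal_deformation_def by blast
qed

lemma formal_deformation_leading_coefficient_in_Z1:
  assumes deformation: "formal_deformation sg br sv \<rho> T \<sigma>" and "0 < K"
    and lower: "\<And>j. 0 < j \<Longrightarrow> j < K \<Longrightarrow> \<sigma> j = (\<lambda>_. 0)"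
  shows "\<sigma> K \<in> Z1 sg br sv \<rho> T"
proof -
  have T: "\<sigma> 0 = T" and linear: "\<And>i. Vector_Spaces.linear sv sg (\<sigma> i)"
    and coeff: "(\<Sum>i\<le>K. br (\<sigma> i a) (\<sigma> (K - i) b))
                = (\<Sum>i\<le>K. \<sigma> i (\<rho> (\<sigma> (K - i) a) b - \<rho> (\<sigma> (K - i) b) a))"
    for a b
    using deformation unfolding formal_deformation_def by blast+
  have cocycle: "br (T a) (\<sigma> K b) + br (\<sigma> K a) (T b)
      = T (\<rho> (\<sigma> K a) b - \<rho> (\<sigma> K b) a) + \<sigma> K (\<rho> (T a) b - \<rho> (T b) a)" for a b
  proof -
    have "(\<Sum>i\<le>K. br (\<sigma> i a) (\<sigma> (K - i) b)) = br (T a) (\<sigma> K b) + br (\<sigma> K a) (T b)"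
      by (subst sum_atMost_ends[OF \<open>0 < K\<close>]) (simp_all add: lower T)
    moreover have "(\<Sum>i\<le>K. \<sigma> i (\<rho> (\<sigma> (K - i) a) b - \<rho> (\<sigma> (K - i) b) a))
        = T (\<rho> (\<sigma> K a) b - \<rho> (\<sigma> K b) a) + \<sigma> K (\<rho> (T a) b - \<rho> (T b) a)"
      by (subst sum_atMost_ends[OF \<open>0 < K\<close>]) (simp_all add: lower T)
    ultimately show ?thesis
      using coeff[of a b] by simp
  qed
  show ?thesis
    unfolding Z1_def
  proof (intro CollectI conjI allI)
    fix u v
    show "br (T u) (\<sigma> K v) - br (T v) (\<sigma> K u) - T (\<rho> (\<sigma> K u) v - \<rho> (\<sigma> K v) u)
        - \<sigma> K (\<rho> (T u) v - \<rho> (T v) u) = 0"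
      using cocycle[of u v] br_anticomm[of "T v" "\<sigma> K u"] by (simp add: algebra_simps)
  qed (rule linear)
qed

lemma linear_id_plus_br: "Vector_Spaces.linear sg sg (id_plus K (br x) n)"
  by (rule linear_id_plus[OF vector_space_g linear_br])

lemma linear_id_plus_rho: "Vector_Spaces.linear sv sv (id_plus K (\<rho> x) n)"
  by (rule linear_id_plus[OF vector_space_v linear_rho])

definition gauge_transform :: "nat \<Rightarrow> 'g \<Rightarrow> (nat \<Rightarrow> 'v \<Rightarrow> 'g) \<Rightarrow> nat \<Rightarrow> 'v \<Rightarrow> 'g" where
  "gauge_transform K x \<sigma> = comp_inv_id_plus K (\<rho> x) (series_comp (id_plus K (br x)) \<sigma>)"

lemma linear_gauge_transform:
  "(\<And>i. Vector_Spaces.linear sv sg (\<sigma> i)) \<Longrightarrow> Vector_Spaces.linear sv sg (gauge_transform K x \<sigma> n)"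
  unfolding gauge_transform_def
  by (intro linear_comp_inv_id_plus linear_rho linear_series_comp[OF linear_id_plus_br])

lemma series_comp_gauge_transform:
  assumes "0 < K" and "\<And>i. Vector_Spaces.linear sv sg (\<sigma> i)"
  shows "series_comp (gauge_transform K x \<sigma>) (id_plus K (\<rho> x)) = series_comp (id_plus K (br x)) \<sigma>"
  unfolding gauge_transform_def
  by (rule series_comp_inv_id_plus[OF assms(1) linear_rho
        linear_series_comp[OF linear_id_plus_br assms(2)]])

lemma gauge_transform_below:
  assumes "j < K"
  shows "gauge_transform K x \<sigma> j = \<sigma> j"
proof -
  have "gauge_transform K x \<sigma> j = series_comp (id_plus K (br x)) \<sigma> j"
    unfolding gauge_transform_def using assms by (subst comp_inv_id_plus.simps) simp
  then show ?thesis
    using assms by (simp add: series_comp_id_plus_left fun_eq_iff)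
qed

lemma gauge_transform_at:
  assumes "0 < K"
  shows "gauge_transform K x \<sigma> K u = \<sigma> K u + br x (\<sigma> 0 u) - \<sigma> 0 (\<rho> x u)"
proof -
  have "gauge_transform K x \<sigma> K u
      = series_comp (id_plus K (br x)) \<sigma> K u - gauge_transform K x \<sigma> 0 (\<rho> x u)"
    unfolding gauge_transform_def using assms by (subst comp_inv_id_plus.simps) simp
  then show ?thesis
    using assms by (simp add: gauge_transform_below series_comp_id_plus_left)
qed

lemma gauge_transform_vanishes:
  assumes "0 < K" and "\<sigma> 0 = T" and "\<sigma> K = d_rhobar br \<rho> T x"
  shows "gauge_transform K x \<sigma> K = (\<lambda>_. 0)"
proof
  fix u
  show "gauge_transform K x \<sigma> K u = 0"
    using assms br_anticomm[of x "T u"] by (simp add: gauge_transform_at d_rhobar_def)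
qed

definition series_bracket_hom :: "(nat \<Rightarrow> 'g \<Rightarrow> 'g) \<Rightarrow> bool" where
  "series_bracket_hom P \<longleftrightarrow>
     (\<forall>y z. cauchy_prod br (series_apply P y) (series_apply P z)
        = series_apply P (cauchy_prod br y z))"

definition series_rep_compatible :: "(nat \<Rightarrow> 'g \<Rightarrow> 'g) \<Rightarrow> (nat \<Rightarrow> 'v \<Rightarrow> 'v) \<Rightarrow> bool" where
  "series_rep_compatible P Q \<longleftrightarrow>
     (\<forall>y u. series_apply Q (cauchy_prod \<rho> y u)
        = cauchy_prod \<rho> (series_apply P y) (series_apply Q u))"

lemma series_bracket_hom_id: "series_bracket_hom series_id"
  by (simp add: series_bracket_hom_def series_apply_id)

lemma series_rep_compatible_id: "series_rep_compatible series_id series_id"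
  by (simp add: series_rep_compatible_def series_apply_id)

lemma series_bracket_hom_comp:
  assumes "series_bracket_hom A" and "series_bracket_hom P" and "\<And>i. additive (A i)"
  shows "series_bracket_hom (series_comp A P)"
  using assms by (simp add: series_bracket_hom_def series_apply_comp)

lemma series_rep_compatible_comp:
  assumes "series_rep_compatible A B" and "series_rep_compatible P Q"
    and "\<And>i. additive (A i)" and "\<And>i. additive (B i)"
  shows "series_rep_compatible (series_comp A P) (series_comp B Q)"
  using assms by (simp add: series_rep_compatible_def series_apply_comp)

lemma series_bracket_hom_id_plus:
  assumes "0 < k" and abelian: "\<And>y z. br (br x y) (br x z) = 0"
  shows "series_bracket_hom (id_plus k (br x))"
  unfolding series_bracket_hom_def
proof (intro allI)
  fix y z
  have square_zero: "cauchy_prod br (\<lambda>m. br x (y m)) (\<lambda>m. br x (z m)) = (\<lambda>_. 0)"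
    by (simp add: cauchy_prod_def abelian fun_eq_iff)
  have derivation: "br x (cauchy_prod br y z n)
      = cauchy_prod br y (\<lambda>m. br x (z m)) n + cauchy_prod br (\<lambda>m. br x (y m)) z n" for n
    by (simp add: cauchy_prod_def additive.sum[OF additive_br] br_derivation[of x] add.commute
        flip: sum.distrib)
  show "cauchy_prod br (series_apply (id_plus k (br x)) y) (series_apply (id_plus k (br x)) z)
      = series_apply (id_plus k (br x)) (cauchy_prod br y z)"
    using \<open>0 < k\<close> derivation
    by (simp add: series_apply_id_plus
        cauchy_prod_shift_square_zero[OF additive_br_left additive_br square_zero])
qed

lemma series_rep_compatible_id_plus:
  assumes "0 < k" and annihilates: "\<And>y u. \<rho> (br x y) (\<rho> x u) = 0"
  shows "series_rep_compatible (id_plus k (br x)) (id_plus k (\<rho> x))"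
  unfolding series_rep_compatible_def
proof (intro allI)
  fix y u
  have square_zero: "cauchy_prod \<rho> (\<lambda>m. br x (y m)) (\<lambda>m. \<rho> x (u m)) = (\<lambda>_. 0)"
    by (simp add: cauchy_prod_def annihilates fun_eq_iff)
  have derivation: "\<rho> x (cauchy_prod \<rho> y u n)
      = cauchy_prod \<rho> y (\<lambda>m. \<rho> x (u m)) n + cauchy_prod \<rho> (\<lambda>m. br x (y m)) u n" for n
    by (simp add: cauchy_prod_def additive.sum[OF additive_rho] rho_br flip: sum.distrib)
  show "series_apply (id_plus k (\<rho> x)) (cauchy_prod \<rho> y u)
      = cauchy_prod \<rho> (series_apply (id_plus k (br x)) y) (series_apply (id_plus k (\<rho> x)) u)"
    using \<open>0 < k\<close> derivation
    by (simp add: series_apply_id_plus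
        cauchy_prod_shift_square_zero[OF additive_rho_left additive_rho square_zero])
qed

text \<open>Every series argument of \<open>\<sigma>'\<close> has the form \<open>B u\<close>, and the identity for \<open>\<sigma>\<close> at \<open>u\<close>
  is transported to \<open>\<sigma>'\<close> at \<open>B u\<close> by \<open>A\<close>.\<close>
lemma series_deformation_conjugate:
  assumes \<sigma>: "series_deformation \<sigma>"
    and hom: "series_bracket_hom A" and compatible: "series_rep_compatible A B"
    and surj: "surj (series_apply B)"
    and conj: "series_comp \<sigma>' B = series_comp A \<sigma>"
    and additive: "\<And>i. additive (A i)" "\<And>i. additive (B i)" "\<And>i. additive (\<sigma>' i)"
  shows "series_deformation \<sigma>'"
  unfolding series_deformation_def
proof (intro allI)
  fix u v
  obtain u' v' where u: "u = series_apply B u'" and v: "v = series_apply B v'"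
    using surj by (metis surjD)
  have conj_apply: "series_apply \<sigma>' (series_apply B w) = series_apply A (series_apply \<sigma> w)" for w
    using series_apply_comp[of \<sigma>' B w] series_apply_comp[of A \<sigma> w] additive conj by simp
  have "cauchy_prod br (series_apply \<sigma>' u) (series_apply \<sigma>' v)
      = series_apply A (cauchy_prod br (series_apply \<sigma> u') (series_apply \<sigma> v'))"
    using hom by (simp add: u v conj_apply series_bracket_hom_def)
  also have "\<dots> = series_apply A (series_apply \<sigma>
      (\<lambda>m. cauchy_prod \<rho> (series_apply \<sigma> u') v' m - cauchy_prod \<rho> (series_apply \<sigma> v') u' m))"
    using \<sigma> by (simp add: series_deformation_def)
  also have "\<dots> = series_apply \<sigma>' (series_apply B
      (\<lambda>m. cauchy_prod \<rho> (series_apply \<sigma> u') v' m - cauchy_prod \<rho> (series_apply \<sigma> v') u' m))"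
    by (simp add: conj_apply)
  also have "series_apply B
      (\<lambda>m. cauchy_prod \<rho> (series_apply \<sigma> u') v' m - cauchy_prod \<rho> (series_apply \<sigma> v') u' m)
      = (\<lambda>m. cauchy_prod \<rho> (series_apply \<sigma>' u) v m - cauchy_prod \<rho> (series_apply \<sigma>' v) u m)"
    using compatible
    by (simp add: series_apply_diff[where F=B, OF additive(2)] series_rep_compatible_def u v
        conj_apply)
  finally show "cauchy_prod br (series_apply \<sigma>' u) (series_apply \<sigma>' v)
      = series_apply \<sigma>'
          (\<lambda>m. cauchy_prod \<rho> (series_apply \<sigma>' u) v m - cauchy_prod \<rho> (series_apply \<sigma>' v) u m)" .
qed

lemma formal_deformation_gauge_transform:
  assumes deformation: "formal_deformation sg br sv \<rho> T \<sigma>" and "0 < K" and x: "x \<in> Nij br \<rho> T"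
  shows "formal_deformation sg br sv \<rho> T (gauge_transform K x \<sigma>)"
proof -
  have T: "\<sigma> 0 = T" and linear: "\<And>i. Vector_Spaces.linear sv sg (\<sigma> i)"
    and \<sigma>: "series_deformation \<sigma>"
    using deformation by (simp_all add: formal_deformation_iff_series_deformation)
  have linear': "Vector_Spaces.linear sv sg (gauge_transform K x \<sigma> i)" for i
    using linear by (rule linear_gauge_transform)
  have "series_deformation (gauge_transform K x \<sigma>)"
  proof (rule series_deformation_conjugate[OF \<sigma>])
    show "series_bracket_hom (id_plus K (br x))"
      using x \<open>0 < K\<close> by (intro series_bracket_hom_id_plus) (auto simp: Nij_def)
    show "series_rep_compatible (id_plus K (br x)) (id_plus K (\<rho> x))"
      using x \<open>0 < K\<close> by (intro series_rep_compatible_id_plus) (auto simp: Nij_def)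
    show "surj (series_apply (id_plus K (\<rho> x)))"
      using series_apply_id_plus_inv[OF \<open>0 < K\<close>] by (metis surjI)
    show "series_comp (gauge_transform K x \<sigma>) (id_plus K (\<rho> x)) = series_comp (id_plus K (br x)) \<sigma>"
      using \<open>0 < K\<close> linear by (rule series_comp_gauge_transform)
  qed (intro linear_imp_additive[OF linear_id_plus_br] linear_imp_additive[OF linear_id_plus_rho]
      linear_imp_additive[OF linear'])+

  then show ?thesis
    using \<open>0 < K\<close> T linear'
    by (simp add: formal_deformation_iff_series_deformation gauge_transform_below)
qed

lemma series_bracket_hom_coefficient:
  assumes "series_bracket_hom P" and "\<And>i. P i 0 = 0"
  shows "(\<Sum>i\<le>n. br (P i y) (P (n - i) z)) = P n (br y z)"
proof -
  have "cauchy_prod br (series_apply P (series_const y)) (series_apply P (series_const z)) n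
      = series_apply P (cauchy_prod br (series_const y) (series_const z)) n"
    using assms(1) by (simp add: series_bracket_hom_def)
  then show ?thesis
    using assms(2) by (simp add: series_apply_const cauchy_prod_const_const cauchy_prod_def)
qed

lemma series_rep_compatible_coefficient:
  assumes "series_rep_compatible P Q" and "\<And>i. P i 0 = 0" and "\<And>i. Q i 0 = 0"
  shows "Q n (\<rho> y u) = (\<Sum>i\<le>n. \<rho> (P i y) (Q (n - i) u))"
proof -
  have "series_apply Q (cauchy_prod \<rho> (series_const y) (series_const u)) n
      = cauchy_prod \<rho> (series_apply P (series_const y)) (series_apply Q (series_const u)) n"
    using assms(1) by (simp add: series_rep_compatible_def)
  then show ?thesis
    using assms(2,3) by (simp add: series_apply_const cauchy_prod_const_const cauchy_prod_def)
qed

end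

section \<open>Gauging away a deformation order by order\<close>

locale Nij_exact_deformation = lie_representation sg br sv \<rho>
  for sg :: "'k::field \<Rightarrow> 'g \<Rightarrow> 'g::ab_group_add"
    and br :: "'g \<Rightarrow> 'g \<Rightarrow> 'g"
    and sv :: "'k \<Rightarrow> 'v \<Rightarrow> 'v::ab_group_add"
    and \<rho> :: "'g \<Rightarrow> 'v \<Rightarrow> 'v" +
  fixes T :: "'v \<Rightarrow> 'g"
    and \<tau> :: "nat \<Rightarrow> 'v \<Rightarrow> 'g"
  assumes Z1_eq: "Z1 sg br sv \<rho> T = d_rhobar br \<rho> T ` Nij br \<rho> T"
    and deformation: "formal_deformation sg br sv \<rho> T \<tau>"
begin

definition gauge_element :: "(nat \<Rightarrow> 'v \<Rightarrow> 'g) \<Rightarrow> nat \<Rightarrow> 'g" where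
  "gauge_element \<sigma> K = (SOME x. x \<in> Nij br \<rho> T \<and> d_rhobar br \<rho> T x = \<sigma> K)"

lemma gauge_element:
  assumes "formal_deformation sg br sv \<rho> T \<sigma>" and "0 < K"
    and "\<And>j. 0 < j \<Longrightarrow> j < K \<Longrightarrow> \<sigma> j = (\<lambda>_. 0)"
  shows "gauge_element \<sigma> K \<in> Nij br \<rho> T \<and> d_rhobar br \<rho> T (gauge_element \<sigma> K) = \<sigma> K"
proof -
  have "\<sigma> K \<in> d_rhobar br \<rho> T ` Nij br \<rho> T"
    using formal_deformation_leading_coefficient_in_Z1[OF assms] by (simp add: Z1_eq)
  then have "\<exists>x. x \<in> Nij br \<rho> T \<and> d_rhobar br \<rho> T x = \<sigma> K"
    by auto
  then show ?thesis
    unfolding gauge_element_def by (rule someI_ex)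
qed

text \<open>\<open>g_gauge k\<close> and \<open>v_gauge k\<close> accumulate the gauges applied on \<open>\<gg>\<close> and on \<open>V\<close> to pass
  from \<open>\<tau>\<close> to \<open>stage k\<close>.\<close>
primrec stage :: "nat \<Rightarrow> nat \<Rightarrow> 'v \<Rightarrow> 'g" where
  "stage 0 = \<tau>"
| "stage (Suc k) = gauge_transform (Suc k) (gauge_element (stage k) (Suc k)) (stage k)"

abbreviation stage_element :: "nat \<Rightarrow> 'g" where
  "stage_element k \<equiv> gauge_element (stage k) (Suc k)"

primrec g_gauge :: "nat \<Rightarrow> nat \<Rightarrow> 'g \<Rightarrow> 'g" where
  "g_gauge 0 = series_id"
| "g_gauge (Suc k) = series_comp (id_plus (Suc k) (br (stage_element k))) (g_gauge k)"

primrec v_gauge :: "nat \<Rightarrow> nat \<Rightarrow> 'v \<Rightarrow> 'v" where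
  "v_gauge 0 = series_id"
| "v_gauge (Suc k) = series_comp (id_plus (Suc k) (\<rho> (stage_element k))) (v_gauge k)"

lemma stage_formal_deformation_vanishing:
  "formal_deformation sg br sv \<rho> T (stage k) \<and> (\<forall>j. 0 < j \<longrightarrow> j \<le> k \<longrightarrow> stage k j = (\<lambda>_. 0))"
proof (induction k)
  case 0
  then show ?case
    using deformation by simp
next
  case (Suc k)
  then have deformation_k: "formal_deformation sg br sv \<rho> T (stage k)"
    and vanishing: "\<And>j. 0 < j \<Longrightarrow> j < Suc k \<Longrightarrow> stage k j = (\<lambda>_. 0)"
    by auto
  have x: "stage_element k \<in> Nij br \<rho> T"
    and dx: "d_rhobar br \<rho> T (stage_element k) = stage k (Suc k)"
    using gauge_element[OF deformation_k _ vanishing] by auto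
  have "stage k 0 = T"
    using deformation_k by (simp add: formal_deformation_def)
  then have "stage (Suc k) (Suc k) = (\<lambda>_. 0)"
    using dx by (simp add: gauge_transform_vanishes)
  then show ?case
    using formal_deformation_gauge_transform[OF deformation_k _ x] vanishing
    by (auto simp: gauge_transform_below le_Suc_eq)
qed

lemma stage_formal_deformation: "formal_deformation sg br sv \<rho> T (stage k)"
  using stage_formal_deformation_vanishing by blast

lemma stage_vanishing: "0 < j \<Longrightarrow> j \<le> k \<Longrightarrow> stage k j = (\<lambda>_. 0)"
  using stage_formal_deformation_vanishing by blast

lemma stage_element_Nij: "stage_element k \<in> Nij br \<rho> T"
  using gauge_element[OF stage_formal_deformation, of "Suc k" k] stage_vanishing by auto

lemma linear_g_gauge: "Vector_Spaces.linear sg sg (g_gauge k n)"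
  by (induction k arbitrary: n)
    (simp_all add: linear_series_id vector_space_g linear_series_comp[OF linear_id_plus_br])

lemma linear_v_gauge: "Vector_Spaces.linear sv sv (v_gauge k n)"
  by (induction k arbitrary: n)
    (simp_all add: linear_series_id vector_space_v linear_series_comp[OF linear_id_plus_rho])

lemma series_bracket_hom_g_gauge: "series_bracket_hom (g_gauge k)"
proof (induction k)
  case (Suc k)
  have "series_bracket_hom (id_plus (Suc k) (br (stage_element k)))"
    using stage_element_Nij by (intro series_bracket_hom_id_plus) (auto simp: Nij_def)
  then show ?case
    using Suc by (simp add: series_bracket_hom_comp linear_imp_additive[OF linear_id_plus_br])
qed (simp add: series_bracket_hom_id)

lemma series_rep_compatible_gauge: "series_rep_compatible (g_gauge k) (v_gauge k)"
proof (induction k)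
  case (Suc k)
  have "series_rep_compatible (id_plus (Suc k) (br (stage_element k)))
      (id_plus (Suc k) (\<rho> (stage_element k)))"
    using stage_element_Nij by (intro series_rep_compatible_id_plus) (auto simp: Nij_def)
  then show ?case
    using Suc by (simp add: series_rep_compatible_comp linear_imp_additive[OF linear_id_plus_br]
        linear_imp_additive[OF linear_id_plus_rho])
qed (simp add: series_rep_compatible_id)

lemma stage_conjugate: "series_comp (stage k) (v_gauge k) = series_comp (g_gauge k) \<tau>"
proof (induction k)
  case 0
  have "Vector_Spaces.linear sv sg (\<tau> i)" for i
    using deformation by (simp add: formal_deformation_def)
  then have "\<tau> i 0 = 0" for i
    by (rule additive.zero[OF linear_imp_additive])

  then show ?case
    by (simp add: series_comp_id_left series_comp_id_right)
next
  case (Suc k)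
  let ?A = "id_plus (Suc k) (br (stage_element k))"
  let ?B = "id_plus (Suc k) (\<rho> (stage_element k))"
  have linear: "Vector_Spaces.linear sv sg (stage k i)" for i
    using stage_formal_deformation by (simp add: formal_deformation_def)
  have "series_comp (stage (Suc k)) (v_gauge (Suc k))
      = series_comp (series_comp (stage (Suc k)) ?B) (v_gauge k)"
    using linear_imp_additive[OF linear_gauge_transform[OF linear]]
    by (simp add: series_comp_assoc)
  also have "\<dots> = series_comp ?A (series_comp (stage k) (v_gauge k))"
    using linear by (simp add: series_comp_gauge_transform series_comp_assoc
        linear_imp_additive[OF linear_id_plus_br])
  also have "\<dots> = series_comp (g_gauge (Suc k)) \<tau>"
    by (simp add: Suc series_comp_assoc linear_imp_additive[OF linear_id_plus_br])
  finally show ?case .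
qed

lemma g_gauge_stable: "n \<le> m \<Longrightarrow> g_gauge m n = g_gauge n n"
  by (rule id_plus_products_stabilize[of g_gauge]) simp

lemma v_gauge_stable: "n \<le> m \<Longrightarrow> v_gauge m n = v_gauge n n"
  by (rule id_plus_products_stabilize[of v_gauge]) simp

lemma T_v_gauge: "T (v_gauge n n u) = (\<Sum>i\<le>n. g_gauge n i (\<tau> (n - i) u))"
proof -
  have "stage n 0 = T"
    using stage_formal_deformation by (simp add: formal_deformation_def)
  then have "series_comp (stage n) (v_gauge n) n u = (\<Sum>i\<le>n. if i = 0 then T (v_gauge n n u) else 0)"
    unfolding series_comp_def by (intro sum.cong) (auto simp: stage_vanishing)
  then show ?thesis
    by (simp add: stage_conjugate series_comp_def)
qed

lemma trivial_deformation: "trivial_deformation sg br sv \<rho> T \<tau>"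
proof -
  define \<phi> where "\<phi> n = g_gauge n n" for n
  define \<psi> where "\<psi> n = v_gauge n n" for n
  have g_zero: "g_gauge k i 0 = 0" and v_zero: "v_gauge k i 0 = 0" for k i
    by (rule additive.zero[OF linear_imp_additive[OF linear_g_gauge]]
        additive.zero[OF linear_imp_additive[OF linear_v_gauge]])+
  have g_stable: "g_gauge n i = \<phi> i" and v_stable: "v_gauge n i = \<psi> i" if "i \<le> n" for n i
    using that unfolding \<phi>_def \<psi>_def by (rule g_gauge_stable v_gauge_stable)+
  have \<phi>_01: "\<phi> 0 = id" "\<phi> 1 = br (stage_element 0)"
    and \<psi>_01: "\<psi> 0 = id" "\<psi> 1 = \<rho> (stage_element 0)"
    by (simp_all add: \<phi>_def \<psi>_def series_comp_id_plus_left series_id_def id_plus_def fun_eq_iff)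
  have bracket: "(\<Sum>i\<le>n. br (\<phi> i y) (\<phi> (n - i) z)) = \<phi> n (br y z)" for n y z
  proof -
    have "(\<Sum>i\<le>n. br (g_gauge n i y) (g_gauge n (n - i) z)) = g_gauge n n (br y z)"
      by (rule series_bracket_hom_coefficient[OF series_bracket_hom_g_gauge g_zero])
    then show ?thesis
      by (simp add: g_stable)
  qed
  have rep: "\<psi> n (\<rho> y u) = (\<Sum>i\<le>n. \<rho> (\<phi> i y) (\<psi> (n - i) u))" for n y u
  proof -
    have "v_gauge n n (\<rho> y u) = (\<Sum>i\<le>n. \<rho> (g_gauge n i y) (v_gauge n (n - i) u))"
      by (rule series_rep_compatible_coefficient[OF series_rep_compatible_gauge g_zero v_zero])
    then show ?thesis
      by (simp add: g_stable v_stable)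
  qed
  have conj: "(\<Sum>i\<le>n. (if i = 0 then T else (\<lambda>_. 0)) (\<psi> (n - i) u)) = (\<Sum>i\<le>n. \<phi> i (\<tau> (n - i) u))"
    for n u
  proof -
    have "(\<Sum>i\<le>n. (if i = 0 then T else (\<lambda>_. 0)) (\<psi> (n - i) u))
        = (\<Sum>i\<le>n. if i = 0 then T (\<psi> n u) else 0)"
      by (intro sum.cong) auto
    then show ?thesis
      using T_v_gauge[of n u] by (simp add: g_stable \<psi>_def)
  qed
  have "Vector_Spaces.linear sg sg (\<phi> i)" and "Vector_Spaces.linear sv sv (\<psi> i)" for i
    by (simp_all add: \<phi>_def \<psi>_def linear_g_gauge linear_v_gauge)
  then show ?thesis
    unfolding trivial_deformation_def deformations_equivalent_def
    using \<phi>_01 \<psi>_01 bracket rep conj by blast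
qed

end

theorem proposition5p9:
  fixes sg :: "'k::field \<Rightarrow> 'g \<Rightarrow> 'g::ab_group_add"
    and br :: "'g \<Rightarrow> 'g \<Rightarrow> 'g"
    and sv :: "'k \<Rightarrow> 'v \<Rightarrow> 'v::ab_group_add"
    and \<rho> :: "'g \<Rightarrow> 'v \<Rightarrow> 'v"
    and T :: "'v \<Rightarrow> 'g"
  assumes "O_operator sg br sv \<rho> T"
    and "Z1 sg br sv \<rho> T = d_rhobar br \<rho> T ` Nij br \<rho> T"
  shows "rigid sg br sv \<rho> T"
  unfolding rigid_def
proof (intro allI impI)
  fix \<tau>
  assume "formal_deformation sg br sv \<rho> T \<tau>"
  then interpret Nij_exact_deformation sg br sv \<rho> T \<tau>
    using assms by unfold_locales (simp_all add: O_operator_def)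
  show "trivial_deformation sg br sv \<rho> T \<tau>"
    by (rule trivial_deformation)
qed

end
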